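(* Let $M$ be a proper metric space, $X_1,\dots,X_n$ a coarsely transverse collection of half spaces, and for $0\le k\le n-1$ let $\mathcal{X}_k=\partial X_{k+1}\Cap\dots\Cap\partial X_n$, and $\mathcal{X}_n=\{M\}$. Then for every $0\le k\le n$, $\mathbf 1\wedge X_1\wedge\dots\wedge X_k\in CX^k_\alpha(\mathcal{X}_k)$.
   Context: Borel sets are identified with indicator functions; $\mathbf 1$ is the constant function. For $Y\subseteq M$, $Y_R=\{x:d(x,Y)\le R\}$. Coarsely transverse half spaces: Borel sets with $\bigcap_i (X_i)_R\cap(X_i^c)_R$ bounded for all $R$. A big family is a collection of subsets closed under subsets, finite unions and thickenings; $\{Y\}=\{Z:Z\subseteq Y_R\text{ for some }R\}$; $\mathcal{X}\Cap\mathcal{Y}=\{X\cap Y:X\in\mathcal X, Y\in\mathcal Y\}$; $\partial X=\{X\}\Cap\{X^c\}$; $\{M\}$ is the family of all subsets. For a big family $\mathcal{Y}$, $CX^k_\alpha(\mathcal{Y})$ is the space of anti-symmetric locally bounded Borel functions $\theta:M^{k+1}\to\mathbb{C}$ such that $\mathrm{supp}(\theta)\cap\Delta_R\cap Y^{k+1}$ is bounded for all $R>0$ and $Y\in\mathcal{Y}$, where $M^{k+1}$ has the max metric and $\Delta_R$ is the $R$-thickening of the multi-diagonal. $f_0\wedge\dots\wedge f_k=\sum_{\sigma\in S_{k+1}}\mathrm{sgn}(\sigma)f_{\sigma_0}\otimes\dots\otimes f_{\sigma_k}$. *)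

theory Defs
  imports "HOL-Analysis.Analysis" "HOL-Probability.Probability" "HOL-Combinatorics.Permutations"
begin

text \<open>Points of M^(k+1) are extensional functions on indices 0..k.\<close>

definition pts :: "nat \<Rightarrow> (nat \<Rightarrow> 'a) set" where
  "pts k = PiE {..k} (\<lambda>_. UNIV)"

definition maxdist :: "nat \<Rightarrow> (nat \<Rightarrow> 'a::metric_space) \<Rightarrow> (nat \<Rightarrow> 'a) \<Rightarrow> real" where
  "maxdist k x y = Max ((\<lambda>i. dist (x i) (y i)) ` {..k})"

definition bounded_pts :: "nat \<Rightarrow> (nat \<Rightarrow> 'a::metric_space) set \<Rightarrow> bool" where
  "bounded_pts k S \<longleftrightarrow> (\<exists>c\<in>pts k. \<exists>r. \<forall>y\<in>S. maxdist k c y \<le> r)"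

text \<open>R-thickening Y_R = {x. d(x,Y) <= R}, with d(x,{}) = infinity.\<close>
definition thick :: "'a::metric_space set \<Rightarrow> real \<Rightarrow> 'a set" where
  "thick Y R = {x. Y \<noteq> {} \<and> infdist x Y \<le> R}"

definition coarsely_transverse :: "nat \<Rightarrow> (nat \<Rightarrow> 'a::metric_space set) \<Rightarrow> bool" where
  "coarsely_transverse n X \<longleftrightarrow>
     (\<forall>i\<in>{1..n}. X i \<in> sets borel) \<and>
     (\<forall>R. bounded (\<Inter>i\<in>{1..n}. thick (X i) R \<inter> thick (- X i) R))"

definition gen_family :: "'a::metric_space set \<Rightarrow> 'a set set" where
  "gen_family Y = {Z. \<exists>R. Z \<subseteq> thick Y R}"

definition cap_family :: "'a set set \<Rightarrow> 'a set set \<Rightarrow> 'a set set" where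
  "cap_family A B = {X \<inter> Y | X Y. X \<in> A \<and> Y \<in> B}"

definition bdry_family :: "'a::metric_space set \<Rightarrow> 'a set set" where
  "bdry_family X = cap_family (gen_family X) (gen_family (- X))"

text \<open>X_k = dX_{k+1} \<Cap> ... \<Cap> dX_n for k < n, and X_n = {M} (all subsets).\<close>
definition Xfam :: "nat \<Rightarrow> (nat \<Rightarrow> 'a::metric_space set) \<Rightarrow> nat \<Rightarrow> 'a set set" where
  "Xfam n X k = (if k = n then UNIV
     else {\<Inter>i\<in>{k+1..n}. Z i | Z. \<forall>i\<in>{k+1..n}. Z i \<in> bdry_family (X i)})"

definition wedge :: "nat \<Rightarrow> (nat \<Rightarrow> 'a \<Rightarrow> complex) \<Rightarrow> (nat \<Rightarrow> 'a) \<Rightarrow> complex" where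
  "wedge k f x = (\<Sum>\<sigma>\<in>{\<sigma>. \<sigma> permutes {..k}}. of_int (sign \<sigma>) * (\<Prod>i\<in>{..k}. f (\<sigma> i) (x i)))"

definition support_pts :: "nat \<Rightarrow> ((nat \<Rightarrow> 'a) \<Rightarrow> complex) \<Rightarrow> (nat \<Rightarrow> 'a) set" where
  "support_pts k \<theta> = {x \<in> pts k. \<theta> x \<noteq> 0}"

definition diag_thick :: "nat \<Rightarrow> real \<Rightarrow> (nat \<Rightarrow> 'a::metric_space) set" where
  "diag_thick k R = {y \<in> pts k. \<exists>p. \<forall>i\<in>{..k}. dist (y i) p \<le> R}"

definition CX :: "nat \<Rightarrow> 'a::metric_space set set \<Rightarrow> ((nat \<Rightarrow> 'a) \<Rightarrow> complex) set" where
  "CX k \<Y> = {\<theta>.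
     (\<forall>\<sigma>. \<sigma> permutes {..k} \<longrightarrow> (\<forall>x\<in>pts k. \<theta> (x \<circ> \<sigma>) = of_int (sign \<sigma>) * \<theta> x)) \<and>
     (\<forall>x\<in>pts k. \<exists>r>0. bounded (\<theta> ` {y\<in>pts k. maxdist k x y < r})) \<and>
     \<theta> \<in> borel_measurable (PiM {..k} (\<lambda>_. borel)) \<and>
     (\<forall>R>0. \<forall>Y\<in>\<Y>. bounded_pts k (support_pts k \<theta> \<inter> diag_thick k R \<inter> PiE {..k} (\<lambda>_. Y)))}"

end

theory Submission
  imports Defs
begin

text \<open>
  If \<open>\<one> \<and> X\<^sub>1 \<and> \<dots> \<and> X\<^sub>k\<close> does not vanish at \<open>(x\<^sub>0, \<dots>, x\<^sub>k)\<close>, then every \<open>X\<^sub>j\<close> with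
  \<open>1 \<le> j \<le> k\<close> contains some \<open>x\<^sub>i\<close> and misses another: otherwise its factor vanishes on
  all points or agrees there with the factor \<open>\<one>\<close>, and the alternating sum cancels.
  Hence a point \<open>p\<close> within \<open>R\<close> of all \<open>x\<^sub>i\<close> lies within \<open>R\<close> of \<open>X\<^sub>j\<close> and of its
  complement for \<open>j \<le> k\<close>, while for \<open>j > k\<close> the condition \<open>x\<^sub>0 \<in> Y \<in> \<X>\<^sub>k\<close> places
  \<open>x\<^sub>0\<close>, and so \<open>p\<close>, near both sides of \<open>X\<^sub>j\<close> as well. Coarse transversality then
  confines \<open>p\<close> to a bounded set. Antisymmetry, the uniform bound \<open>(k+1)!\<close> and
  measurability are formal properties of the wedge.
\<close>

lemma permutes_imp_permutation: "finite S \<Longrightarrow> p permutes S \<Longrightarrow> permutation p"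
  using permutation_permutes by blast

lemma wedge_compose_permutation:
  assumes s: "s permutes {..k}"
  shows "wedge k f (x \<circ> s) = of_int (sign s) * wedge k f x"
proof -
  let ?term = "\<lambda>t. of_int (sign t) * (\<Prod>i\<in>{..k}. f ((t \<circ> inv s) i) (x i))"
  have "wedge k f (x \<circ> s) = (\<Sum>t | t permutes {..k}. ?term t)"
    unfolding wedge_def
  proof (intro sum.cong refl)
    fix t
    have "(\<Prod>i\<in>{..k}. f ((t \<circ> inv s) i) (x i)) = (\<Prod>i\<in>{..k}. f ((t \<circ> inv s) (s i)) (x (s i)))"
      using prod.permute[OF s] by (simp add: o_def)
    then show "of_int (sign t) * (\<Prod>i\<in>{..k}. f (t i) ((x \<circ> s) i)) = ?term t"
      using permutes_inverses(2)[OF s] by simp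
  qed
  also have "\<dots> = (\<Sum>t | t permutes {..k}. ?term (t \<circ> s))"
    by (rule sum_permutations_compose_right[OF s])
  also have "\<dots> = (\<Sum>t | t permutes {..k}. of_int (sign s) * (of_int (sign t) * (\<Prod>i\<in>{..k}. f (t i) (x i))))"
  proof (intro sum.cong refl)
    fix t assume "t \<in> {t. t permutes {..k}}"
    then have t: "t permutes {..k}" by simp
    then have "sign (t \<circ> s) = sign s * sign t"
      using sign_compose[OF permutes_imp_permutation[OF _ t] permutes_imp_permutation[OF _ s]]
      by (simp add: mult.commute)
    then show "?term (t \<circ> s) = of_int (sign s) * (of_int (sign t) * (\<Prod>i\<in>{..k}. f (t i) (x i)))"
      using permutes_inverses(1)[OF s] by simp
  qed
  finally show ?thesis
    unfolding wedge_def by (simp add: sum_distrib_left)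
qed

lemma wedge_eq_0_if_factor_vanishes:
  assumes "j \<le> k" and "\<And>i. i \<le> k \<Longrightarrow> f j (x i) = 0"
  shows "wedge k f x = 0"
  unfolding wedge_def
proof (intro sum.neutral ballI)
  fix t assume "t \<in> {t. t permutes {..k}}"
  then have t: "t permutes {..k}" by simp
  have "inv t j \<in> {..k}" and "t (inv t j) = j"
    using assms(1) permutes_in_image[OF permutes_inv[OF t]] permutes_inverses(1)[OF t] by auto
  then have "\<exists>i\<in>{..k}. f (t i) (x i) = 0"
    using assms(2) by force
  then show "of_int (sign t) * (\<Prod>i\<in>{..k}. f (t i) (x i)) = 0"
    by simp
qed

lemma wedge_eq_0_if_factors_agree:
  assumes "a \<le> k" "b \<le> k" "a \<noteq> b" and agree: "\<And>i. i \<le> k \<Longrightarrow> f a (x i) = f b (x i)"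
  shows "wedge k f x = 0"
proof -
  let ?\<tau> = "Transposition.transpose a b"
  let ?term = "\<lambda>t. of_int (sign t) * (\<Prod>i\<in>{..k}. f (t i) (x i))"
  have \<tau>: "?\<tau> permutes {..k}"
    using assms(1,2) by (intro permutes_swap_id) auto
  have "wedge k f x = (\<Sum>t | t permutes {..k}. ?term (?\<tau> \<circ> t))"
    unfolding wedge_def by (rule setum_permutations_compose_left[OF \<tau>]) \<comment> \<open>sic, library name\<close>
  also have "\<dots> = (\<Sum>t | t permutes {..k}. - ?term t)"
  proof (intro sum.cong refl)
    fix t assume "t \<in> {t. t permutes {..k}}"
    then have t: "t permutes {..k}" by simp
    have "permutation t"
      using permutes_imp_permutation[OF _ t] by simp
    then have "sign (?\<tau> \<circ> t) = - sign t"
      using sign_compose[OF permutation_swap_id[of a b]] sign_swap_id[of a b] assms(3) by simp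
    moreover have "f ((?\<tau> \<circ> t) i) (x i) = f (t i) (x i)" if "i \<le> k" for i
      using agree that permutes_in_image[OF t, of i] by (auto simp: Transposition.transpose_def)
    ultimately show "?term (?\<tau> \<circ> t) = - ?term t"
      by simp
  qed
  finally show ?thesis
    unfolding wedge_def by (simp add: sum_negf)
qed

lemma norm_wedge_le_fact:
  assumes "\<And>j y. j \<le> k \<Longrightarrow> norm (f j y) \<le> 1"
  shows "norm (wedge k f x) \<le> fact (Suc k)"
proof -
  have "norm (of_int (sign t) * (\<Prod>i\<in>{..k}. f (t i) (x i))) \<le> 1" if t: "t permutes {..k}" for t
  proof -
    have "norm (\<Prod>i\<in>{..k}. f (t i) (x i)) \<le> 1"
      unfolding prod_norm[symmetric]
      using assms permutes_in_image[OF t] by (intro prod_le_1) auto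
    moreover have "norm (of_int (sign t) :: complex) = 1"
      by (cases rule: sign_cases[of t]) auto
    ultimately show ?thesis by (simp add: norm_mult)
  qed
  then have "norm (wedge k f x) \<le> card {t. t permutes {..k}}"
    unfolding wedge_def using sum_norm_le[of "{t. t permutes {..k}}" _ "\<lambda>_. 1"] by force
  then show ?thesis
    by (simp add: card_permutations[of "{..k}" "Suc k"] algebra_simps)
qed

lemma wedge_borel_measurable:
  assumes "\<And>j. j \<le> k \<Longrightarrow> f j \<in> borel_measurable borel"
  shows "wedge k f \<in> borel_measurable (PiM {..k} (\<lambda>_. borel))"
proof -
  have "(\<lambda>x. f (t i) (x i)) \<in> borel_measurable (PiM {..k} (\<lambda>_. borel))"
    if "t permutes {..k}" "i \<in> {..k}" for t i
    using measurable_compose[OF measurable_component_singleton[OF that(2)] assms]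
      permutes_in_image[OF that(1)] that(2) by auto
  then show ?thesis
    unfolding wedge_def by (intro borel_measurable_sum borel_measurable_times borel_measurable_prod) auto
qed

lemma wedge_indicators_nonzero_separates:
  fixes X :: "nat \<Rightarrow> 'a set"
  defines "F \<equiv> \<lambda>i. if i = 0 then (\<lambda>_. 1) else (indicator (X i) :: 'a \<Rightarrow> complex)"
  assumes nonzero: "wedge k F x \<noteq> 0" and j: "j \<in> {1..k}"
  shows "\<exists>i\<le>k. x i \<in> X j" and "\<exists>i\<le>k. x i \<notin> X j"
proof (rule_tac [!] ccontr)
  assume "\<not> (\<exists>i\<le>k. x i \<in> X j)"
  then have "F j (x i) = 0" if "i \<le> k" for i
    using j that by (simp add: F_def)
  then show False
    using wedge_eq_0_if_factor_vanishes[of j k F x] nonzero j by simp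
next
  assume "\<not> (\<exists>i\<le>k. x i \<notin> X j)"
  then have "F 0 (x i) = F j (x i)" if "i \<le> k" for i
    using j that by (simp add: F_def)
  then show False
    using wedge_eq_0_if_factors_agree[of 0 k j F x] nonzero j by simp
qed

lemma thick_mono: "r \<le> s \<Longrightarrow> thick A r \<subseteq> thick A s"
  unfolding thick_def by auto

lemma thick_if_dist_le: "y \<in> A \<Longrightarrow> dist p y \<le> s \<Longrightarrow> p \<in> thick A s"
  unfolding thick_def using infdist_le[of y A p] by auto

lemma thick_add_if_dist_le: "y \<in> thick A r \<Longrightarrow> dist p y \<le> s \<Longrightarrow> p \<in> thick A (r + s)"
  unfolding thick_def using infdist_triangle[of p A y] by auto

lemma bdry_family_subset_thick:
  assumes "Z \<in> bdry_family A"
  shows "\<exists>r. Z \<subseteq> thick A r \<inter> thick (- A) r"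
proof -
  obtain U V where "Z = U \<inter> V" and "U \<in> gen_family A" and "V \<in> gen_family (- A)"
    using assms unfolding bdry_family_def cap_family_def by blast
  then obtain r1 r2 where "Z \<subseteq> thick A r1" and "Z \<subseteq> thick (- A) r2"
    unfolding gen_family_def by blast
  then have "Z \<subseteq> thick A (max r1 r2) \<inter> thick (- A) (max r1 r2)"
    using thick_mono[of r1 "max r1 r2" A] thick_mono[of r2 "max r1 r2" "- A"] by auto
  then show ?thesis ..
qed

lemma Xfam_subset_thick:
  assumes "Y \<in> Xfam n X k"
  obtains r where "r \<ge> 0" and "\<And>i. i \<in> {k+1..n} \<Longrightarrow> Y \<subseteq> thick (X i) r \<inter> thick (- X i) r"
proof (cases "k = n")
  case True
  then show thesis using that[of 0] by simp
next
  case False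
  then obtain Z where Y: "Y = (\<Inter>i\<in>{k+1..n}. Z i)"
    and Z: "\<And>i. i \<in> {k+1..n} \<Longrightarrow> Z i \<in> bdry_family (X i)"
    using assms unfolding Xfam_def by auto
  have "\<forall>i\<in>{k+1..n}. \<exists>r. Z i \<subseteq> thick (X i) r \<inter> thick (- X i) r"
    using Z bdry_family_subset_thick by blast
  then obtain rZ where rZ: "\<And>i. i \<in> {k+1..n} \<Longrightarrow> Z i \<subseteq> thick (X i) (rZ i) \<inter> thick (- X i) (rZ i)"
    by metis
  define r where "r = Max (insert 0 (rZ ` {k+1..n}))"
  have "rZ i \<le> r" if "i \<in> {k+1..n}" for i
    unfolding r_def using that by (intro Max_ge) auto
  then have "Y \<subseteq> thick (X i) r \<inter> thick (- X i) r" if "i \<in> {k+1..n}" for i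
    using rZ[OF that] thick_mono[of "rZ i" r] that unfolding Y by blast
  moreover have "r \<ge> 0"
    unfolding r_def by (intro Max_ge) auto
  ultimately show thesis using that by blast
qed

lemma bounded_pts_if_near_bounded:
  assumes "bounded B" and near: "\<And>y. y \<in> S \<Longrightarrow> \<exists>p\<in>B. \<forall>i\<le>k. dist (y i) p \<le> R"
  shows "bounded_pts k S"
proof -
  obtain a e where ae: "\<And>z. z \<in> B \<Longrightarrow> dist a z \<le> e"
    using assms(1) unfolding bounded_def by blast
  define c where "c = restrict (\<lambda>_. a) {..k}"
  have "c \<in> pts k"
    unfolding c_def pts_def by simp
  moreover have "maxdist k c y \<le> e + R" if y: "y \<in> S" for y
  proof -
    obtain p where "p \<in> B" and p: "\<forall>i\<le>k. dist (y i) p \<le> R"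
      using near[OF y] by blast
    have "dist a (y i) \<le> e + R" if "i \<le> k" for i
      using dist_triangle[of a "y i" p] ae[OF \<open>p \<in> B\<close>] p[rule_format, OF that]
      by (simp add: dist_commute)
    then show ?thesis
      unfolding maxdist_def c_def by (subst Max_le_iff) auto
  qed
  ultimately show ?thesis
    unfolding bounded_pts_def by blast
qed

lemma wedge_indicators_nonzero_near_boundaries:
  fixes X :: "nat \<Rightarrow> 'a::metric_space set"
  assumes nonzero: "wedge k (\<lambda>i. if i = 0 then (\<lambda>_. 1) else indicator (X i)) y \<noteq> 0"
    and near: "\<forall>i\<le>k. dist (y i) p \<le> R"
    and "0 \<le> r"
    and beyond_k: "\<And>j. j \<in> {k+1..n} \<Longrightarrow> y 0 \<in> thick (X j) r \<inter> thick (- X j) r"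
    and j: "j \<in> {1..n}"
  shows "p \<in> thick (X j) (r + R) \<inter> thick (- X j) (r + R)"
proof (cases "j \<le> k")
  case True
  then obtain i1 i2 where "i1 \<le> k" "y i1 \<in> X j" "i2 \<le> k" "y i2 \<in> - X j"
    using wedge_indicators_nonzero_separates[OF nonzero] j by (metis atLeastAtMost_iff ComplI)
  then have "p \<in> thick (X j) R \<inter> thick (- X j) R"
    using near thick_if_dist_le by (metis IntI dist_commute)
  then show ?thesis
    using thick_mono[of R "r + R"] \<open>0 \<le> r\<close> by auto
next
  case False
  then have "y 0 \<in> thick (X j) r \<inter> thick (- X j) r"
    using beyond_k j by auto
  moreover have "dist p (y 0) \<le> R"
    using near by (simp add: dist_commute)
  ultimately show ?thesis
    using thick_add_if_dist_le by blast
qed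

lemma wedge_indicators_support_diag_bounded:
  fixes X :: "nat \<Rightarrow> 'a::metric_space set"
  assumes transverse: "coarsely_transverse n X" and Y: "Y \<in> Xfam n X k"
  defines "S \<equiv> support_pts k (wedge k (\<lambda>i. if i = 0 then (\<lambda>_. 1) else indicator (X i)))"
  shows "bounded_pts k (S \<inter> diag_thick k R \<inter> PiE {..k} (\<lambda>_. Y))"
proof -
  obtain r where "0 \<le> r" and r: "\<And>j. j \<in> {k+1..n} \<Longrightarrow> Y \<subseteq> thick (X j) r \<inter> thick (- X j) r"
    using Xfam_subset_thick[OF Y] by blast
  let ?B = "\<Inter>j\<in>{1..n}. thick (X j) (r + R) \<inter> thick (- X j) (r + R)"
  show ?thesis
  proof (rule bounded_pts_if_near_bounded)
    show "bounded ?B"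
      using transverse unfolding coarsely_transverse_def by blast
  next
    fix y assume y: "y \<in> S \<inter> diag_thick k R \<inter> PiE {..k} (\<lambda>_. Y)"
    then obtain p where p: "\<forall>i\<le>k. dist (y i) p \<le> R"
      unfolding diag_thick_def by auto
    have "y 0 \<in> Y"
      using y by auto
    then have "p \<in> ?B"
      using wedge_indicators_nonzero_near_boundaries[OF _ p \<open>0 \<le> r\<close>] r y
      unfolding S_def support_pts_def by blast
    then show "\<exists>p\<in>?B. \<forall>i\<le>k. dist (y i) p \<le> R"
      using p by blast
  qed
qed

theorem lemma5p1:
  fixes X :: "nat \<Rightarrow> 'a::metric_space set" and n :: nat
  assumes proper: "\<forall>(x::'a) r. compact (cball x r)"
    and transverse: "coarsely_transverse n X"
  shows "\<forall>k\<le>n. wedge k (\<lambda>i. if i = 0 then (\<lambda>_. 1) else indicator (X i)) \<in> CX k (Xfam n X k)"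
proof (intro allI impI)
  fix k assume "k \<le> n"
  let ?F = "\<lambda>i. if i = 0 then (\<lambda>_. 1) else (indicator (X i) :: 'a \<Rightarrow> complex)"
  have "norm (wedge k ?F x) \<le> fact (Suc k)" for x
    by (rule norm_wedge_le_fact) (simp add: indicator_def)
  then have wedge_bounded: "bounded (wedge k ?F ` A)" for A
    unfolding bounded_iff by blast
  have "?F j \<in> borel_measurable borel" if "j \<le> k" for j
    using transverse \<open>k \<le> n\<close> that unfolding coarsely_transverse_def by auto
  then have "wedge k ?F \<in> borel_measurable (PiM {..k} (\<lambda>_. borel))"
    by (rule wedge_borel_measurable)
  then show "wedge k ?F \<in> CX k (Xfam n X k)"
    unfolding CX_def
    using wedge_compose_permutation wedge_bounded zero_less_one
      wedge_indicators_support_diag_bounded[OF transverse]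
    by (intro CollectI conjI allI impI ballI) blast+
qed

end
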